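(* For every $f:\{0,1\}^n\to\{0,1\}$ and all sets $J\subseteq K\subseteq[n]$, $\mathrm{SymInf}_f(J)\le\mathrm{SymInf}_f(K)$.
   Context: $\mathcal{S}_J$ is the set of permutations of $[n]$ fixing every element outside $J$; $\pi x$ is the vector whose $\pi(i)$-th coordinate is $x_i$. $\mathrm{SymInf}_f(J)=\Pr_{x,\pi}[f(x)\ne f(\pi x)]$ with $x$ uniform in $\{0,1\}^n$ and $\pi$ uniform in $\mathcal{S}_J$. *)

theory Defs
  imports Complex_Main "HOL-Library.FuncSet" "HOL-Combinatorics.Permutations"
begin

definition cube :: "nat \<Rightarrow> (nat \<Rightarrow> bool) set" where
  "cube n = {0..<n} \<rightarrow>\<^sub>E (UNIV :: bool set)"

text \<open>pi x: the pi(i)-th coordinate of pi x is x_i, i.e. (pi x)_j = x_(pi^-1 j).\<close>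
definition perm_act :: "(nat \<Rightarrow> nat) \<Rightarrow> (nat \<Rightarrow> bool) \<Rightarrow> (nat \<Rightarrow> bool)" where
  "perm_act p x = (\<lambda>j. x (inv p j))"

definition SymGrp :: "nat set \<Rightarrow> (nat \<Rightarrow> nat) set" where
  "SymGrp J = {p. p permutes J}"

definition SymInf :: "nat \<Rightarrow> ((nat \<Rightarrow> bool) \<Rightarrow> bool) \<Rightarrow> nat set \<Rightarrow> real" where
  "SymInf n f J =
     real (card {(x, p). x \<in> cube n \<and> p \<in> SymGrp J \<and> f x \<noteq> f (perm_act p x)})
     / (real (card (cube n)) * real (card (SymGrp J)))"

end

theory Submission
  imports Defs
begin

text \<open>Let \<open>g\<close> be the 0/1 indicator of \<open>f\<close> and \<open>A\<^sub>J g\<close> its average over the \<open>S\<^sub>J\<close>-orbit. Counting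
  disagreeing pairs gives \<open>SymInf\<^sub>f(J) = 2 (\<langle>g, g\<rangle> - \<langle>g, A\<^sub>J g\<rangle>) / 2\<^sup>n\<close>. Averaging is the orthogonal
  projection onto \<open>S\<^sub>J\<close>-invariant functions, and \<open>A\<^sub>K g\<close> is \<open>S\<^sub>J\<close>-invariant since \<open>S\<^sub>J \<subseteq> S\<^sub>K\<close>;
  hence \<open>\<langle>g, A\<^sub>J g\<rangle> - \<langle>g, A\<^sub>K g\<rangle> = \<parallel>A\<^sub>J g - A\<^sub>K g\<parallel>\<^sup>2 \<ge> 0\<close>.\<close>

definition avg :: "'g set \<Rightarrow> ('g \<Rightarrow> 'x \<Rightarrow> 'x) \<Rightarrow> ('x \<Rightarrow> real) \<Rightarrow> 'x \<Rightarrow> real" where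
  "avg G act g x = (\<Sum>p\<in>G. g (act p x)) / real (card G)"

definition invariant_on :: "'g set \<Rightarrow> ('g \<Rightarrow> 'x \<Rightarrow> 'x) \<Rightarrow> 'x set \<Rightarrow> ('x \<Rightarrow> 'a) \<Rightarrow> bool" where
  "invariant_on G act X w \<longleftrightarrow> (\<forall>p\<in>G. \<forall>x\<in>X. w (act p x) = w x)"

lemma invariant_on_subset:
  "invariant_on G act X w \<Longrightarrow> H \<subseteq> G \<Longrightarrow> invariant_on H act X w"
  unfolding invariant_on_def by blast

lemma invariant_on_avg:
  assumes rmul: "\<And>p. p \<in> G \<Longrightarrow> bij_betw (\<lambda>s. mul s p) G G"
    and act_mul: "\<And>p s x. p \<in> G \<Longrightarrow> s \<in> G \<Longrightarrow> x \<in> X \<Longrightarrow> act (mul s p) x = act s (act p x)"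
  shows "invariant_on G act X (avg G act g)"
  unfolding invariant_on_def
proof (intro ballI)
  fix p x assume "p \<in> G" "x \<in> X"
  have "(\<Sum>s\<in>G. g (act s (act p x))) = (\<Sum>s\<in>G. g (act (mul s p) x))"
    using act_mul \<open>p \<in> G\<close> \<open>x \<in> X\<close> by simp
  also have "\<dots> = (\<Sum>s\<in>G. g (act s x))"
    using sum.reindex_bij_betw[OF rmul[OF \<open>p \<in> G\<close>], of "\<lambda>s. g (act s x)"] by simp
  finally show "avg G act g (act p x) = avg G act g x"
    unfolding avg_def by simp
qed

lemma sum_avg_mult_invariant:
  assumes "finite H" "H \<noteq> {}"
    and bij: "\<And>p. p \<in> H \<Longrightarrow> bij_betw (act p) X X"
    and "invariant_on H act X w"
  shows "(\<Sum>x\<in>X. avg H act g x * w x) = (\<Sum>x\<in>X. g x * w x)"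
proof -
  have "(\<Sum>x\<in>X. avg H act g x * w x) = (\<Sum>x\<in>X. \<Sum>p\<in>H. g (act p x) * w (act p x)) / real (card H)"
    using \<open>invariant_on H act X w\<close>
    by (simp add: avg_def invariant_on_def sum_divide_distrib sum_distrib_right)
  also have "(\<Sum>x\<in>X. \<Sum>p\<in>H. g (act p x) * w (act p x)) = (\<Sum>p\<in>H. \<Sum>x\<in>X. g x * w x)"
    by (subst sum.swap) (intro sum.cong refl sum.reindex_bij_betw bij)
  finally show ?thesis
    using assms(1,2) by simp
qed

lemma sum_mult_avg_antimono:
  assumes "finite X" "finite G" "H \<noteq> {}" "H \<subseteq> G"
    and bij: "\<And>p. p \<in> G \<Longrightarrow> bij_betw (act p) X X"
    and inv_H: "invariant_on H act X (avg H act g)"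
    and inv_G: "invariant_on G act X (avg G act g)"
  shows "(\<Sum>x\<in>X. g x * avg G act g x) \<le> (\<Sum>x\<in>X. g x * avg H act g x)"
proof -
  define a where "a = avg H act g"
  define b where "b = avg G act g"
  have "finite H" "G \<noteq> {}"
    using assms(2-4) finite_subset by auto
  note avg_H = sum_avg_mult_invariant[OF \<open>finite H\<close> \<open>H \<noteq> {}\<close>, of act X]
  have aa: "(\<Sum>x\<in>X. a x * a x) = (\<Sum>x\<in>X. g x * a x)"
    unfolding a_def using \<open>H \<subseteq> G\<close> by (intro avg_H inv_H bij) blast
  have ab: "(\<Sum>x\<in>X. a x * b x) = (\<Sum>x\<in>X. g x * b x)"
    unfolding a_def b_def using \<open>H \<subseteq> G\<close>
    by (intro avg_H invariant_on_subset[OF inv_G] bij) blast+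
  have bb: "(\<Sum>x\<in>X. b x * b x) = (\<Sum>x\<in>X. g x * b x)"
    unfolding b_def by (intro sum_avg_mult_invariant[OF \<open>finite G\<close> \<open>G \<noteq> {}\<close>] bij inv_G)
  have "0 \<le> (\<Sum>x\<in>X. (a x - b x) * (a x - b x))"
    by (intro sum_nonneg) simp
  also have "\<dots> = (\<Sum>x\<in>X. a x * a x) - 2 * (\<Sum>x\<in>X. a x * b x) + (\<Sum>x\<in>X. b x * b x)"
    by (simp add: algebra_simps sum.distrib sum_subtractf sum_distrib_left)
  finally show ?thesis
    using aa ab bb unfolding a_def b_def by simp
qed

lemma card_disagreeing_pairs:
  fixes f :: "'x \<Rightarrow> bool"
  assumes "finite X" "finite G"
    and bij: "\<And>p. p \<in> G \<Longrightarrow> bij_betw (act p) X X"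
  defines "g \<equiv> \<lambda>x. of_bool (f x) :: real"
  shows "real (card {(x, p). x \<in> X \<and> p \<in> G \<and> f x \<noteq> f (act p x)})
       = 2 * real (card G) * ((\<Sum>x\<in>X. g x) - (\<Sum>x\<in>X. g x * avg G act g x))"
proof -
  have "{(x, p). x \<in> X \<and> p \<in> G \<and> f x \<noteq> f (act p x)} = Sigma X (\<lambda>x. {p\<in>G. f x \<noteq> f (act p x)})"
    by auto
  then have "real (card {(x, p). x \<in> X \<and> p \<in> G \<and> f x \<noteq> f (act p x)})
      = (\<Sum>x\<in>X. \<Sum>p\<in>G. of_bool (f x \<noteq> f (act p x)))"
    using assms(1,2) by (simp add: card_SigmaI sum.If_cases Int_def)
  also have "\<dots> = (\<Sum>x\<in>X. \<Sum>p\<in>G. g x + g (act p x) - 2 * g x * g (act p x))"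
    by (intro sum.cong refl) (simp add: g_def)
  also have "\<dots> = real (card G) * (\<Sum>x\<in>X. g x) + (\<Sum>p\<in>G. \<Sum>x\<in>X. g (act p x))
      - 2 * (\<Sum>x\<in>X. g x * (\<Sum>p\<in>G. g (act p x)))"
    by (simp add: sum.distrib sum_subtractf sum_distrib_left mult.assoc sum.swap[of _ G X])
  also have "(\<Sum>p\<in>G. \<Sum>x\<in>X. g (act p x)) = real (card G) * (\<Sum>x\<in>X. g x)"
    using sum.cong[OF refl sum.reindex_bij_betw[OF bij, where g = g]] by simp
  also have "(\<Sum>x\<in>X. g x * (\<Sum>p\<in>G. g (act p x))) = real (card G) * (\<Sum>x\<in>X. g x * avg G act g x)"
    using assms(2) by (cases "G = {}") (simp_all add: avg_def sum_distrib_left[symmetric] sum_divide_distrib[symmetric])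
  finally show ?thesis
    by (simp add: algebra_simps)
qed

lemma perm_act_comp:
  assumes "s permutes K" "p permutes K"
  shows "perm_act (s \<circ> p) x = perm_act s (perm_act p x)"
  using assms by (simp add: perm_act_def o_inv_distrib permutes_bij)

lemma perm_act_in_cube:
  assumes "p permutes K" "K \<subseteq> {0..<n}" "x \<in> cube n"
  shows "perm_act p x \<in> cube n"
proof -
  have "inv p j = j" if "j \<notin> {0..<n}" for j
    using permutes_inv[OF assms(1)] assms(2) that by (meson permutes_not_in subsetD)
  then show ?thesis
    using assms(3) unfolding cube_def perm_act_def by (auto simp: PiE_iff extensional_def)
qed

lemma bij_betw_perm_act_cube:
  assumes "p permutes K" "K \<subseteq> {0..<n}"
  shows "bij_betw (perm_act p) (cube n) (cube n)"
proof (rule bij_betw_byWitness[where f'="perm_act (inv p)"])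
  show "\<forall>x\<in>cube n. perm_act (inv p) (perm_act p x) = x"
    and "\<forall>x\<in>cube n. perm_act p (perm_act (inv p) x) = x"
    using assms(1) by (simp_all add: perm_act_def permutes_inverses inv_inv_eq permutes_bij)
  show "perm_act p ` cube n \<subseteq> cube n" "perm_act (inv p) ` cube n \<subseteq> cube n"
    using perm_act_in_cube[OF _ assms(2)] assms(1) permutes_inv by blast+
qed

lemma bij_betw_comp_right_SymGrp:
  assumes "p permutes K"
  shows "bij_betw (\<lambda>s. s \<circ> p) (SymGrp K) (SymGrp K)"
proof (rule bij_betw_byWitness[where f'="\<lambda>s. s \<circ> inv p"])
  show "\<forall>s\<in>SymGrp K. s \<circ> p \<circ> inv p = s" "\<forall>s\<in>SymGrp K. s \<circ> inv p \<circ> p = s"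
    using assms by (simp_all add: o_assoc[symmetric] permutes_inv_o)
  show "(\<lambda>s. s \<circ> p) ` SymGrp K \<subseteq> SymGrp K" "(\<lambda>s. s \<circ> inv p) ` SymGrp K \<subseteq> SymGrp K"
    using assms by (auto simp: SymGrp_def permutes_compose permutes_inv)
qed

lemma invariant_on_avg_SymGrp:
  assumes "K \<subseteq> {0..<n}"
  shows "invariant_on (SymGrp K) perm_act (cube n) (avg (SymGrp K) perm_act g)"
proof (rule invariant_on_avg[where mul = "(\<circ>)"])
  show "bij_betw (\<lambda>s. s \<circ> p) (SymGrp K) (SymGrp K)" if "p \<in> SymGrp K" for p
    using that bij_betw_comp_right_SymGrp by (simp add: SymGrp_def)
qed (simp add: SymGrp_def perm_act_comp)

lemma finite_cube: "finite (cube n)"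
  unfolding cube_def by (simp add: finite_PiE)

lemma finite_SymGrp: "finite K \<Longrightarrow> finite (SymGrp K)"
  unfolding SymGrp_def by (rule finite_permutations)

lemma SymGrp_mono: "J \<subseteq> K \<Longrightarrow> SymGrp J \<subseteq> SymGrp K"
  unfolding SymGrp_def by (auto intro: permutes_subset)

lemma SymInf_eq_avg:
  fixes f :: "(nat \<Rightarrow> bool) \<Rightarrow> bool"
  assumes "K \<subseteq> {0..<n}"
  defines "g \<equiv> \<lambda>x. of_bool (f x) :: real"
  shows "SymInf n f K
    = 2 * ((\<Sum>x\<in>cube n. g x) - (\<Sum>x\<in>cube n. g x * avg (SymGrp K) perm_act g x)) / real (card (cube n))"
proof -
  have "finite (SymGrp K)"
    using assms(1) finite_subset finite_SymGrp by blast
  moreover have "id \<in> SymGrp K"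
    by (simp add: SymGrp_def permutes_id)
  ultimately have "real (card (SymGrp K)) > 0"
    by (auto simp: card_gt_0_iff)
  moreover have "\<And>p. p \<in> SymGrp K \<Longrightarrow> bij_betw (perm_act p) (cube n) (cube n)"
    using assms(1) bij_betw_perm_act_cube by (auto simp: SymGrp_def)
  ultimately show ?thesis
    unfolding SymInf_def g_def
    by (subst card_disagreeing_pairs[OF finite_cube \<open>finite (SymGrp K)\<close>]) auto
qed

theorem lemma4:
  fixes n :: nat and f :: "(nat \<Rightarrow> bool) \<Rightarrow> bool" and J K :: "nat set"
  assumes "J \<subseteq> K" and "K \<subseteq> {0..<n}"
  shows "SymInf n f J \<le> SymInf n f K"
proof -
  define g where "g = (\<lambda>x. of_bool (f x) :: real)"
  have "J \<subseteq> {0..<n}" "finite K"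
    using assms finite_subset by auto
  have "(\<Sum>x\<in>cube n. g x * avg (SymGrp K) perm_act g x)
      \<le> (\<Sum>x\<in>cube n. g x * avg (SymGrp J) perm_act g x)"
  proof (rule sum_mult_avg_antimono[OF finite_cube finite_SymGrp[OF \<open>finite K\<close>]])
    show "SymGrp J \<noteq> {}"
      by (auto simp: SymGrp_def intro: permutes_id)
    show "SymGrp J \<subseteq> SymGrp K"
      using assms(1) by (rule SymGrp_mono)
    show "\<And>p. p \<in> SymGrp K \<Longrightarrow> bij_betw (perm_act p) (cube n) (cube n)"
      using assms(2) bij_betw_perm_act_cube by (auto simp: SymGrp_def)
  qed (use \<open>J \<subseteq> {0..<n}\<close> assms(2) invariant_on_avg_SymGrp in auto)
  then show ?thesis
    unfolding SymInf_eq_avg[OF \<open>J \<subseteq> {0..<n}\<close>] SymInf_eq_avg[OF assms(2)] g_def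
    by (intro divide_right_mono) auto
qed

end
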